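(* Let $(G,T)$ be a terminal graph that is the join of terminal graphs $(G_1,T)$ and $(G_2,T)$, and let $k$ be a positive integer. Let $(H_1,\ell_1)=\mathcal{C}^c_k(G_1,T)$ and $(H_2,\ell_2)=\mathcal{C}^c_k(G_2,T)$. Construct a labeled graph $(H,\ell)$ as follows: for every pair of nodes $x\in V(H_1)$, $y\in V(H_2)$ with $\ell_1(x)=\ell_2(y)$ introduce a node $(x,y)$ with $\ell((x,y))=\ell_1(x)$; add an edge between two distinct nodes $(x,y)$ and $(x',y')$ if and only if $xx'$ is an edge of $H_1$ and $yy'$ is an edge of $H_2$. Then $(H,\ell)=\mathcal{C}^c_k(G,T)$. Moreover, given certificates for $(H_1,\ell_1)$ and $(H_2,\ell_2)$, there is a certificate for $(H,\ell)$ such that for every $k$-coloring $\gamma$ of $G$, if $x$ is the $\gamma|_{V(G_1)}$-node of $H_1$ and $y$ is the $\gamma|_{V(G_2)}$-node of $H_2$, then $(x,y)$ is the $\gamma$-node of $H$.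
   Context: A terminal graph $(G,T)$ is a graph with $T\subseteq V(G)$. $(G,T)$ is the join of $(G_1,T)$ and $(G_2,T)$ if $G_1,G_2$ are induced subgraphs of $G$, $V(G_1)\cap V(G_2)=T$, $V(G_1)\cup V(G_2)=V(G)$, $V(G_1)\ne T$, $V(G_2)\ne T$, and every edge of $G$ lies in $G_1$ or $G_2$. A $k$-coloring of $G$ is a map $\alpha:V(G)\to\{1,\dots,k\}$ with $\alpha(u)\ne\alpha(w)$ for all edges $uw$. $\mathcal{C}_k(G)$ has the $k$-colorings as nodes, adjacent iff they differ on exactly one vertex. For $T\subseteq V(G)$, label each coloring $\gamma$ by $\gamma|_T$. A label component is a maximal set of colorings with the same label inducing a connected subgraph of $\mathcal{C}_k(G)$. The contracted solution graph $\mathcal{C}^c_k(G,T)=(H,\ell)$ has one node $x$ per label component $S_x$, distinct $x,y$ adjacent iff some $\gamma\in S_x,\gamma'\in S_y$ are adjacent in $\mathcal{C}_k(G)$, and $\ell(x)$ the common label on $S_x$; labeled graphs are identified up to label-preserving isomorphism. A certificate for $(H,\ell)$ is an assignment of nonempty sets $S_x$ of $k$-colorings of $G$ to the nodes such that: the $S_x$ partition the $k$-colorings; $\gamma|_T=\ell(x)$ for $\gamma\in S_x$; adjacent nodes have distinct labels; each $S_x$ induces a connected subgraph of $\mathcal{C}_k(G)$; distinct $x,y$ are adjacent iff some $\gamma\in S_x$ and $\gamma'\in S_y$ are adjacent in $\mathcal{C}_k(G)$. The $\gamma$-node with respect to a certificate $S$ is the node $x$ with $\gamma\in S_x$. *)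

theory Defs
  imports "HOL-Library.FuncSet"
begin

definition graph :: "'v set \<Rightarrow> ('v \<times> 'v) set \<Rightarrow> bool" where
  "graph V E \<longleftrightarrow> finite V \<and> E \<subseteq> V \<times> V \<and> sym E \<and> irrefl E"

definition induced_sub :: "'v set \<Rightarrow> ('v \<times> 'v) set \<Rightarrow> 'v set \<Rightarrow> ('v \<times> 'v) set \<Rightarrow> bool" where
  "induced_sub V E V1 E1 \<longleftrightarrow> V1 \<subseteq> V \<and> E1 = E \<inter> (V1 \<times> V1)"

definition is_join :: "'v set \<Rightarrow> ('v \<times> 'v) set \<Rightarrow> 'v set \<Rightarrow>
    'v set \<Rightarrow> ('v \<times> 'v) set \<Rightarrow> 'v set \<Rightarrow> ('v \<times> 'v) set \<Rightarrow> bool" where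
  "is_join V E T V1 E1 V2 E2 \<longleftrightarrow> graph V E \<and> T \<subseteq> V \<and>
     induced_sub V E V1 E1 \<and> induced_sub V E V2 E2 \<and>
     V1 \<inter> V2 = T \<and> V1 \<union> V2 = V \<and> V1 \<noteq> T \<and> V2 \<noteq> T \<and> E \<subseteq> E1 \<union> E2"

definition colorings :: "nat \<Rightarrow> 'v set \<Rightarrow> ('v \<times> 'v) set \<Rightarrow> ('v \<Rightarrow> nat) set" where
  "colorings k V E = {\<alpha> \<in> V \<rightarrow>\<^sub>E {1..k}. \<forall>(u, w) \<in> E. \<alpha> u \<noteq> \<alpha> w}"

definition col_adj :: "'v set \<Rightarrow> ('v \<Rightarrow> nat) \<Rightarrow> ('v \<Rightarrow> nat) \<Rightarrow> bool" where
  "col_adj V \<alpha> \<beta> \<longleftrightarrow> card {v \<in> V. \<alpha> v \<noteq> \<beta> v} = 1"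

definition induces_connected :: "'v set \<Rightarrow> ('v \<Rightarrow> nat) set \<Rightarrow> bool" where
  "induces_connected V S \<longleftrightarrow>
     (\<forall>\<gamma>\<in>S. \<forall>\<gamma>'\<in>S. (\<gamma>, \<gamma>') \<in> {(a, b). a \<in> S \<and> b \<in> S \<and> col_adj V a b}\<^sup>*)"

definition same_label :: "'v set \<Rightarrow> ('v \<Rightarrow> nat) set \<Rightarrow> bool" where
  "same_label T S \<longleftrightarrow> (\<exists>L. \<forall>\<gamma>\<in>S. restrict \<gamma> T = L)"

definition is_label_component :: "nat \<Rightarrow> 'v set \<Rightarrow> ('v \<times> 'v) set \<Rightarrow> 'v set \<Rightarrow> ('v \<Rightarrow> nat) set \<Rightarrow> bool" where
  "is_label_component k V E T S \<longleftrightarrow>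
     S \<noteq> {} \<and> S \<subseteq> colorings k V E \<and> same_label T S \<and> induces_connected V S \<and>
     (\<forall>S'. S \<subseteq> S' \<and> S' \<subseteq> colorings k V E \<and> same_label T S' \<and> induces_connected V S' \<longrightarrow> S' = S)"

definition csg_nodes :: "nat \<Rightarrow> 'v set \<Rightarrow> ('v \<times> 'v) set \<Rightarrow> 'v set \<Rightarrow> ('v \<Rightarrow> nat) set set" where
  "csg_nodes k V E T = {S. is_label_component k V E T S}"

definition csg_edges :: "nat \<Rightarrow> 'v set \<Rightarrow> ('v \<times> 'v) set \<Rightarrow> 'v set \<Rightarrow> (('v \<Rightarrow> nat) set \<times> ('v \<Rightarrow> nat) set) set" where
  "csg_edges k V E T = {(S, S'). S \<in> csg_nodes k V E T \<and> S' \<in> csg_nodes k V E T \<and> S \<noteq> S' \<and>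
      (\<exists>\<gamma>\<in>S. \<exists>\<gamma>'\<in>S'. col_adj V \<gamma> \<gamma>')}"

definition csg_label :: "'v set \<Rightarrow> ('v \<Rightarrow> nat) set \<Rightarrow> ('v \<Rightarrow> nat)" where
  "csg_label T S = restrict (SOME \<gamma>. \<gamma> \<in> S) T"

definition lgraph :: "'n set \<Rightarrow> ('n \<times> 'n) set \<Rightarrow> bool" where
  "lgraph N A \<longleftrightarrow> finite N \<and> A \<subseteq> N \<times> N \<and> sym A \<and> irrefl A"

definition lg_iso :: "'n set \<Rightarrow> ('n \<times> 'n) set \<Rightarrow> ('n \<Rightarrow> 'l) \<Rightarrow>
    'm set \<Rightarrow> ('m \<times> 'm) set \<Rightarrow> ('m \<Rightarrow> 'l) \<Rightarrow> bool" where
  "lg_iso N A l N' A' l' \<longleftrightarrow> (\<exists>f. bij_betw f N N' \<and>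
      (\<forall>x\<in>N. \<forall>y\<in>N. (x, y) \<in> A \<longleftrightarrow> (f x, f y) \<in> A') \<and> (\<forall>x\<in>N. l' (f x) = l x))"

definition is_certificate :: "nat \<Rightarrow> 'v set \<Rightarrow> ('v \<times> 'v) set \<Rightarrow> 'v set \<Rightarrow>
    'n set \<Rightarrow> ('n \<times> 'n) set \<Rightarrow> ('n \<Rightarrow> ('v \<Rightarrow> nat)) \<Rightarrow> ('n \<Rightarrow> ('v \<Rightarrow> nat) set) \<Rightarrow> bool" where
  "is_certificate k V E T N A l S \<longleftrightarrow>
     (\<forall>x\<in>N. S x \<noteq> {}) \<and>
     (\<Union>x\<in>N. S x) = colorings k V E \<and>
     (\<forall>x\<in>N. \<forall>y\<in>N. x \<noteq> y \<longrightarrow> S x \<inter> S y = {}) \<and>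
     (\<forall>x\<in>N. \<forall>\<gamma>\<in>S x. restrict \<gamma> T = l x) \<and>
     (\<forall>(x, y)\<in>A. l x \<noteq> l y) \<and>
     (\<forall>x\<in>N. induces_connected V (S x)) \<and>
     (\<forall>x\<in>N. \<forall>y\<in>N. x \<noteq> y \<longrightarrow> ((x, y) \<in> A \<longleftrightarrow> (\<exists>\<gamma>\<in>S x. \<exists>\<gamma>'\<in>S y. col_adj V \<gamma> \<gamma>')))"

definition prod_nodes :: "'a set \<Rightarrow> ('a \<Rightarrow> 'l) \<Rightarrow> 'b set \<Rightarrow> ('b \<Rightarrow> 'l) \<Rightarrow> ('a \<times> 'b) set" where
  "prod_nodes N1 l1 N2 l2 = {(x, y). x \<in> N1 \<and> y \<in> N2 \<and> l1 x = l2 y}"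

definition prod_edges :: "'a set \<Rightarrow> ('a \<times> 'a) set \<Rightarrow> ('a \<Rightarrow> 'l) \<Rightarrow>
    'b set \<Rightarrow> ('b \<times> 'b) set \<Rightarrow> ('b \<Rightarrow> 'l) \<Rightarrow> (('a \<times> 'b) \<times> ('a \<times> 'b)) set" where
  "prod_edges N1 A1 l1 N2 A2 l2 = {((x, y), (x', y')).
      (x, y) \<in> prod_nodes N1 l1 N2 l2 \<and> (x', y') \<in> prod_nodes N1 l1 N2 l2 \<and>
      (x, y) \<noteq> (x', y') \<and> (x, x') \<in> A1 \<and> (y, y') \<in> A2}"

definition prod_label :: "('a \<Rightarrow> 'l) \<Rightarrow> ('a \<times> 'b) \<Rightarrow> 'l" where
  "prod_label l1 p = l1 (fst p)"

end

theory Submission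
  imports Defs
begin

text \<open>
  A k-coloring of the join is the same thing as a pair of colorings of the two sides agreeing on T,
  and one recoloring step in G is a step on one side that fixes the other, or, if it recolors a
  terminal, a step on both sides at once. So for certificates S1, S2 of the two sides the colorings
  whose restrictions lie in S1 x and S2 y form a class of G: it is connected (move the G1-part first,
  then the G2-part), and a step between two such classes must change the label, hence recolor a
  terminal, which is a pair of edges x x' and y y'. These classes form a certificate for the product
  graph, and a certificate determines the contracted solution graph up to isomorphism.
\<close>

lemma restrict_eq_iff: "restrict f A = restrict g A \<longleftrightarrow> (\<forall>x\<in>A. f x = g x)"
  by (auto simp: fun_eq_iff)

lemma rtrancl_hom:
  assumes "(a, b) \<in> R\<^sup>*" and "\<And>a b. (a, b) \<in> R \<Longrightarrow> (f a, f b) \<in> R'"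
  shows "(f a, f b) \<in> R'\<^sup>*"
  using assms(1) by induction (auto intro: rtrancl_into_rtrancl assms(2))

section \<open>Connectivity in the solution graph\<close>

definition sol_edges :: "'v set \<Rightarrow> ('v \<Rightarrow> nat) set \<Rightarrow> (('v \<Rightarrow> nat) \<times> ('v \<Rightarrow> nat)) set" where
  "sol_edges V S = {(a, b). a \<in> S \<and> b \<in> S \<and> col_adj V a b}"

lemma induces_connected_iff:
  "induces_connected V S \<longleftrightarrow> (\<forall>a\<in>S. \<forall>b\<in>S. (a, b) \<in> (sol_edges V S)\<^sup>*)"
  by (simp add: induces_connected_def sol_edges_def)

lemma sol_edges_mono: "S \<subseteq> S' \<Longrightarrow> sol_edges V S \<subseteq> sol_edges V S'"
  by (auto simp: sol_edges_def)

lemma col_adj_iff: "col_adj V a b \<longleftrightarrow> (\<exists>v. {w \<in> V. a w \<noteq> b w} = {v})"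
  by (simp add: col_adj_def card_1_singleton_iff)

lemma col_adj_sym: "col_adj V a b \<Longrightarrow> col_adj V b a"
  unfolding col_adj_def by (simp add: eq_commute[of "a _"])

lemma sym_sol_edges: "sym (sol_edges V S)"
  by (auto simp: sol_edges_def sym_def intro: col_adj_sym)

lemma col_adj_restrict_subset:
  assumes "V' \<subseteq> V" and "col_adj V a b"
  shows "restrict a V' = restrict b V' \<or> col_adj V' (restrict a V') (restrict b V')"
proof -
  obtain v where v: "{w \<in> V. a w \<noteq> b w} = {v}"
    using assms(2) by (auto simp: col_adj_iff)
  then have "{w \<in> V'. a w \<noteq> b w} = {v} \<inter> V'"
    using assms(1) by auto
  then show ?thesis
    by (cases "v \<in> V'") (auto simp: col_adj_iff restrict_eq_iff)
qed

lemma col_adj_differ_in: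
  assumes "col_adj V a b" and "T \<subseteq> V" and "restrict a T \<noteq> restrict b T"
  shows "\<exists>t\<in>T. {w \<in> V. a w \<noteq> b w} = {t}"
proof -
  obtain v where v: "{w \<in> V. a w \<noteq> b w} = {v}"
    using assms(1) by (auto simp: col_adj_iff)
  obtain t where "t \<in> T" "a t \<noteq> b t"
    using assms(3) by (auto simp: restrict_eq_iff)
  with v assms(2) show ?thesis by auto
qed

lemma induces_connected_if_reaches:
  assumes "\<And>a. a \<in> S \<Longrightarrow> (a, g) \<in> (sol_edges V S)\<^sup>*"
  shows "induces_connected V S"
  unfolding induces_connected_iff
proof (intro ballI)
  fix a b assume "a \<in> S" "b \<in> S"
  then have "(a, g) \<in> (sol_edges V S)\<^sup>*" "(g, b) \<in> (sol_edges V S)\<^sup>*"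
    using assms symD[OF sym_rtrancl[OF sym_sol_edges]] by blast+
  then show "(a, b) \<in> (sol_edges V S)\<^sup>*" by simp
qed

lemma induces_connected_Union:
  assumes "\<And>S. S \<in> F \<Longrightarrow> g \<in> S \<and> induces_connected V S"
  shows "induces_connected V (\<Union>F)"
proof (rule induces_connected_if_reaches)
  fix a assume "a \<in> \<Union>F"
  then obtain S where S: "S \<in> F" "a \<in> S" by blast
  then have "(a, g) \<in> (sol_edges V S)\<^sup>*"
    using assms by (auto simp: induces_connected_iff)
  moreover have "sol_edges V S \<subseteq> sol_edges V (\<Union>F)"
    using S(1) by (intro sol_edges_mono) blast
  ultimately show "(a, g) \<in> (sol_edges V (\<Union>F))\<^sup>*"
    using rtrancl_mono by blast
qed

lemma induces_connected_Un:
  assumes S: "induces_connected V S" and S': "induces_connected V S'" and "a \<in> S" and "b \<in> S'"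
    and "a = b \<or> col_adj V a b"
  shows "induces_connected V (S \<union> S')"
proof (rule induces_connected_if_reaches)
  let ?R = "sol_edges V (S \<union> S')"
  fix u assume "u \<in> S \<union> S'"
  then show "(u, a) \<in> ?R\<^sup>*"
  proof
    assume "u \<in> S"
    then have "(u, a) \<in> (sol_edges V S)\<^sup>*"
      using S \<open>a \<in> S\<close> by (simp add: induces_connected_iff)
    then show ?thesis
      using rtrancl_mono[OF sol_edges_mono[of S "S \<union> S'"]] by blast
  next
    assume "u \<in> S'"
    then have "(u, b) \<in> (sol_edges V S')\<^sup>*"
      using S' \<open>b \<in> S'\<close> by (simp add: induces_connected_iff)
    then have "(u, b) \<in> ?R\<^sup>*"
      using rtrancl_mono[OF sol_edges_mono[of S' "S \<union> S'"]] by blast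
    moreover have "(b, a) \<in> ?R\<^sup>*"
      using assms(3-5) by (auto simp: sol_edges_def intro: col_adj_sym)
    ultimately show ?thesis
      by (rule rtrancl_trans)
  qed
qed

section \<open>Label components\<close>

lemma label_component_exists:
  assumes "g \<in> colorings k V E"
  shows "\<exists>C. is_label_component k V E T C \<and> g \<in> C"
proof -
  let ?F = "{S. g \<in> S \<and> S \<subseteq> colorings k V E \<and> same_label T S \<and> induces_connected V S}"
  have "{g} \<in> ?F"
    using assms by (auto simp: same_label_def induces_connected_iff)
  moreover have "same_label T (\<Union>?F)"
    unfolding same_label_def by (rule exI[of _ "restrict g T"]) (auto simp: same_label_def)
  moreover have "induces_connected V (\<Union>?F)"
    by (rule induces_connected_Union) blast
  ultimately have "is_label_component k V E T (\<Union>?F)"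
    unfolding is_label_component_def by blast
  with \<open>{g} \<in> ?F\<close> show ?thesis by blast
qed

lemma label_components_eq:
  assumes C: "is_label_component k V E T C" and D: "is_label_component k V E T D"
    and "a \<in> C" and "b \<in> D" and "a = b \<or> col_adj V a b \<and> restrict a T = restrict b T"
  shows "C = D"
proof -
  have "induces_connected V (C \<union> D)"
    using induces_connected_Un[of V C D a b] assms by (auto simp: is_label_component_def)
  moreover have "same_label T (C \<union> D)"
    using assms unfolding is_label_component_def same_label_def by (metis Un_iff)
  moreover have "C \<union> D \<subseteq> colorings k V E"
    using C D by (simp add: is_label_component_def)
  ultimately show ?thesis
    using C D unfolding is_label_component_def by (metis Un_upper1 Un_upper2)
qed

lemma csg_label_eq:
  assumes "is_label_component k V E T C" and "g \<in> C"
  shows "csg_label T C = restrict g T"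
proof -
  have "(SOME g. g \<in> C) \<in> C" using assms(2) by (auto simp: some_in_eq)
  with assms show ?thesis
    by (auto simp: csg_label_def is_label_component_def same_label_def)
qed

lemma label_components_certificate:
  "is_certificate k V E T (csg_nodes k V E T) (csg_edges k V E T) (csg_label T) id"
proof -
  have "colorings k V E \<subseteq> \<Union>(csg_nodes k V E T)"
    using label_component_exists by (fastforce simp: csg_nodes_def)
  moreover have "C \<inter> D = {}" if "C \<in> csg_nodes k V E T" "D \<in> csg_nodes k V E T" "C \<noteq> D" for C D
    using that label_components_eq[of k V E T C D] by (auto simp: csg_nodes_def)
  moreover have "csg_label T C \<noteq> csg_label T D" if "(C, D) \<in> csg_edges k V E T" for C D
  proof
    assume same: "csg_label T C = csg_label T D"
    from that obtain a b where "is_label_component k V E T C" "is_label_component k V E T D"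
      "C \<noteq> D" "a \<in> C" "b \<in> D" "col_adj V a b"
      by (auto simp: csg_edges_def csg_nodes_def)
    with same show False
      using label_components_eq csg_label_eq by metis
  qed
  moreover have "restrict g T = csg_label T C" if "C \<in> csg_nodes k V E T" "g \<in> C" for C g
    using that csg_label_eq by (fastforce simp: csg_nodes_def)
  ultimately show ?thesis
    unfolding is_certificate_def
    by (auto simp: csg_nodes_def csg_edges_def is_label_component_def)
qed

section \<open>Certificates\<close>

context
  fixes k :: nat and V T :: "'v set" and E :: "('v \<times> 'v) set"
    and N :: "'n set" and A :: "('n \<times> 'n) set" and l :: "'n \<Rightarrow> 'v \<Rightarrow> nat"
    and S :: "'n \<Rightarrow> ('v \<Rightarrow> nat) set"
  assumes cert: "is_certificate k V E T N A l S"
begin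

lemma certificate_nonempty: "x \<in> N \<Longrightarrow> S x \<noteq> {}"
  using cert by (simp add: is_certificate_def)

lemma certificate_covers: "g \<in> colorings k V E \<Longrightarrow> \<exists>x\<in>N. g \<in> S x"
  using cert by (auto simp: is_certificate_def)

lemma certificate_colorings: "x \<in> N \<Longrightarrow> g \<in> S x \<Longrightarrow> g \<in> colorings k V E"
  using cert by (auto simp: is_certificate_def)

lemma certificate_disjoint: "x \<in> N \<Longrightarrow> y \<in> N \<Longrightarrow> g \<in> S x \<Longrightarrow> g \<in> S y \<Longrightarrow> x = y"
  using cert unfolding is_certificate_def by blast

lemma certificate_label: "x \<in> N \<Longrightarrow> g \<in> S x \<Longrightarrow> restrict g T = l x"
  using cert by (simp add: is_certificate_def)

lemma certificate_edge_label: "(x, y) \<in> A \<Longrightarrow> l x \<noteq> l y"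
  using cert by (auto simp: is_certificate_def)

lemma certificate_connected: "x \<in> N \<Longrightarrow> induces_connected V (S x)"
  using cert by (simp add: is_certificate_def)

lemma certificate_edge_iff:
  "x \<in> N \<Longrightarrow> y \<in> N \<Longrightarrow> x \<noteq> y \<Longrightarrow> (x, y) \<in> A \<longleftrightarrow> (\<exists>a\<in>S x. \<exists>b\<in>S y. col_adj V a b)"
  using cert by (simp add: is_certificate_def)

lemma certificate_same_class:
  assumes "x \<in> N" and "y \<in> N" and "a \<in> S x" and "b \<in> S y"
    and "a = b \<or> col_adj V a b \<and> restrict a T = restrict b T"
  shows "x = y"
proof (rule ccontr)
  assume "x \<noteq> y"
  then have "(x, y) \<in> A"
    using assms certificate_disjoint certificate_edge_iff by blast
  then show False
    using assms certificate_edge_label certificate_label by metis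
qed

lemma certificate_class_absorbs:
  assumes x: "x \<in> N" and C: "C \<subseteq> colorings k V E" "same_label T C" "induces_connected V C"
    and g: "g \<in> C" "g \<in> S x"
  shows "C \<subseteq> S x"
proof
  fix d assume "d \<in> C"
  with C(3) g(1) have "(g, d) \<in> (sol_edges V C)\<^sup>*"
    by (auto simp: induces_connected_iff)
  then show "d \<in> S x"
  proof (induction rule: rtrancl_induct)
    case base
    show ?case using g(2) .
  next
    case (step a b)
    then have "a \<in> C" "b \<in> C" "col_adj V a b"
      by (auto simp: sol_edges_def)
    moreover obtain y where "y \<in> N" "b \<in> S y"
      using certificate_covers C(1) \<open>b \<in> C\<close> by blast
    moreover have "restrict a T = restrict b T"
      using C(2) \<open>a \<in> C\<close> \<open>b \<in> C\<close> by (auto simp: same_label_def)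
    ultimately show ?case
      using certificate_same_class[OF x _ step.IH] by blast
  qed
qed

lemma certificate_class_label_component:
  assumes "x \<in> N"
  shows "is_label_component k V E T (S x)"
proof -
  have "S x \<subseteq> colorings k V E" "same_label T (S x)"
    using assms certificate_colorings certificate_label by (auto simp: same_label_def)
  moreover obtain g where "g \<in> S x"
    using assms certificate_nonempty by blast
  ultimately show ?thesis
    unfolding is_label_component_def
    using assms certificate_nonempty certificate_connected certificate_class_absorbs by blast
qed

lemma label_component_certificate_class:
  assumes C: "is_label_component k V E T C"
  shows "\<exists>x\<in>N. C = S x"
proof -
  obtain g where "g \<in> C" "g \<in> colorings k V E"
    using C unfolding is_label_component_def by blast
  then obtain x where "x \<in> N" "g \<in> S x"
    using certificate_covers by blast
  then have "C = S x"
    using label_components_eq[OF C certificate_class_label_component] \<open>g \<in> C\<close> by blast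
  with \<open>x \<in> N\<close> show ?thesis ..
qed

lemma certificate_lg_iso: "lg_iso N A l (csg_nodes k V E T) (csg_edges k V E T) (csg_label T)"
proof -
  have inj: "inj_on S N"
    by (rule inj_onI) (metis certificate_disjoint certificate_nonempty ex_in_conv)
  moreover have "S ` N = csg_nodes k V E T"
    using certificate_class_label_component label_component_certificate_class
    by (auto simp: csg_nodes_def)
  ultimately have "bij_betw S N (csg_nodes k V E T)"
    by (simp add: bij_betw_def)
  moreover have "(x, y) \<in> A \<longleftrightarrow> (S x, S y) \<in> csg_edges k V E T" if "x \<in> N" "y \<in> N" for x y
  proof (cases "x = y")
    case True
    then show ?thesis
      using certificate_edge_label by (auto simp: csg_edges_def)
  next
    case False
    then have "S x \<noteq> S y"
      using inj that by (auto dest: inj_onD)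
    with False that show ?thesis
      using certificate_edge_iff certificate_class_label_component
      by (auto simp: csg_edges_def csg_nodes_def)
  qed
  moreover have "csg_label T (S x) = l x" if x: "x \<in> N" for x
  proof -
    obtain g where "g \<in> S x"
      using x certificate_nonempty by blast
    with x show ?thesis
      using csg_label_eq certificate_class_label_component certificate_label by metis
  qed
  ultimately show ?thesis
    unfolding lg_iso_def by blast
qed

end

lemma certificate_lg_iso_transfer:
  assumes cert: "is_certificate k V E T N' A' l' S'" and A: "A \<subseteq> N \<times> N"
    and iso: "lg_iso N A l N' A' l'"
  shows "\<exists>S. is_certificate k V E T N A l S"
proof -
  obtain f where bij: "bij_betw f N N'"
    and edges: "\<And>x y. x \<in> N \<Longrightarrow> y \<in> N \<Longrightarrow> (x, y) \<in> A \<longleftrightarrow> (f x, f y) \<in> A'"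
    and labels: "\<And>x. x \<in> N \<Longrightarrow> l' (f x) = l x"
    using iso by (auto simp: lg_iso_def)
  have inj: "inj_on f N" and img: "f ` N = N'"
    using bij by (auto simp: bij_betw_def)
  have "(\<Union>x\<in>N. S' (f x)) = (\<Union>y\<in>N'. S' y)"
    unfolding img[symmetric] by simp
  moreover have "l x \<noteq> l y" if xy: "(x, y) \<in> A" for x y
  proof -
    have "x \<in> N" "y \<in> N"
      using xy A by auto
    with xy show ?thesis
      using edges labels certificate_edge_label[OF cert] by metis
  qed
  moreover have "f x = f y \<longleftrightarrow> x = y" if "x \<in> N" "y \<in> N" for x y
    using that inj by (auto dest: inj_onD)
  ultimately have "is_certificate k V E T N A l (S' \<circ> f)"
    using cert edges labels img unfolding is_certificate_def by auto blast
  then show ?thesis by blast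
qed

section \<open>Gluing colorings across a join\<close>

lemma restrict_coloring:
  assumes "induced_sub V E V' E'" and "g \<in> colorings k V E"
  shows "restrict g V' \<in> colorings k V' E'"
  using assms by (auto simp: induced_sub_def colorings_def PiE_iff)

locale terminal_join =
  fixes V T V1 V2 :: "'v set" and E E1 E2 :: "('v \<times> 'v) set"
  assumes join: "is_join V E T V1 E1 V2 E2"
begin

lemma induced_sub1: "induced_sub V E V1 E1" and induced_sub2: "induced_sub V E V2 E2"
  and sides_Un: "V1 \<union> V2 = V" and sides_Int: "V1 \<inter> V2 = T"
  and edges_covered: "E \<subseteq> E1 \<union> E2"
  using join by (auto simp: is_join_def)

lemma sides_sub: "V1 \<subseteq> V" "V2 \<subseteq> V"
  using sides_Un by auto

lemma terminals_sub: "T \<subseteq> V1" "T \<subseteq> V2"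
  using sides_Int by auto

lemma restrict_side_terminals:
  "restrict (restrict f V1) T = restrict f T" "restrict (restrict f V2) T = restrict f T"
  using terminals_sub by (auto simp: Int_absorb1)

definition glue :: "('v \<Rightarrow> nat) \<Rightarrow> ('v \<Rightarrow> nat) \<Rightarrow> 'v \<Rightarrow> nat" where
  "glue a b = (\<lambda>w. if w \<in> V1 then a w else b w)"

lemma glue_eq_right:
  assumes "restrict a T = restrict b T" and "w \<in> V2"
  shows "glue a b w = b w"
  using assms sides_Int by (auto simp: glue_def restrict_eq_iff)

lemma glue_coloring:
  assumes a: "a \<in> colorings k V1 E1" and b: "b \<in> colorings k V2 E2"
    and ab: "restrict a T = restrict b T"
  shows "glue a b \<in> colorings k V E" and "restrict (glue a b) V1 = a"
    and "restrict (glue a b) V2 = b"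
proof -
  have a_ext: "a \<in> extensional V1" and b_ext: "b \<in> extensional V2"
    using a b by (auto simp: colorings_def PiE_iff)
  show "restrict (glue a b) V1 = a"
    using a_ext by (auto simp: glue_def fun_eq_iff extensional_def)
  show "restrict (glue a b) V2 = b"
    using b_ext glue_eq_right[OF ab] by (auto simp: fun_eq_iff extensional_def)
  have "glue a b \<in> V \<rightarrow>\<^sub>E {1..k}"
    using a b sides_Un by (auto simp: glue_def colorings_def PiE_iff extensional_def)
  moreover have "glue a b u \<noteq> glue a b w" if "(u, w) \<in> E" for u w
    using that edges_covered
  proof (elim subsetD[THEN UnE])
    assume "(u, w) \<in> E1"
    then show ?thesis
      using a induced_sub1 by (auto simp: glue_def colorings_def induced_sub_def)
  next
    assume "(u, w) \<in> E2"
    then have "u \<in> V2" "w \<in> V2" "b u \<noteq> b w"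
      using b induced_sub2 by (auto simp: colorings_def induced_sub_def)
    then show ?thesis
      using glue_eq_right[OF ab] by simp
  qed
  ultimately show "glue a b \<in> colorings k V E"
    by (auto simp: colorings_def)
qed

lemma glue_restrict: "g \<in> colorings k V E \<Longrightarrow> glue (restrict g V1) (restrict g V2) = g"
  using sides_Un by (auto simp: glue_def fun_eq_iff colorings_def PiE_iff extensional_def)

lemma glue_diff:
  "{w \<in> V. glue a b w \<noteq> glue a' b' w} = {w \<in> V1. a w \<noteq> a' w} \<union> {w \<in> V2 - T. b w \<noteq> b' w}"
  using sides_Un sides_Int by (auto simp: glue_def)

lemma col_adj_glue_left: "col_adj V (glue a b) (glue a' b) \<longleftrightarrow> col_adj V1 a a'"
  by (simp add: col_adj_def glue_diff)

lemma col_adj_glue_right: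
  assumes "restrict b T = restrict b' T"
  shows "col_adj V (glue a b) (glue a b') \<longleftrightarrow> col_adj V2 b b'"
proof -
  have "{w \<in> V2 - T. b w \<noteq> b' w} = {w \<in> V2. b w \<noteq> b' w}"
    using assms by (auto simp: restrict_eq_iff)
  then show ?thesis
    by (simp add: col_adj_def glue_diff)
qed

definition join_class ::
    "nat \<Rightarrow> ('a \<Rightarrow> ('v \<Rightarrow> nat) set) \<Rightarrow> ('b \<Rightarrow> ('v \<Rightarrow> nat) set) \<Rightarrow> 'a \<times> 'b \<Rightarrow> ('v \<Rightarrow> nat) set" where
  "join_class k S1 S2 p =
     {g \<in> colorings k V E. restrict g V1 \<in> S1 (fst p) \<and> restrict g V2 \<in> S2 (snd p)}"

context
  fixes k :: nat
    and N1 :: "'a set" and A1 :: "('a \<times> 'a) set" and l1 :: "'a \<Rightarrow> 'v \<Rightarrow> nat"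
    and S1 :: "'a \<Rightarrow> ('v \<Rightarrow> nat) set"
    and N2 :: "'b set" and A2 :: "('b \<times> 'b) set" and l2 :: "'b \<Rightarrow> 'v \<Rightarrow> nat"
    and S2 :: "'b \<Rightarrow> ('v \<Rightarrow> nat) set"
  assumes cert1: "is_certificate k V1 E1 T N1 A1 l1 S1"
    and cert2: "is_certificate k V2 E2 T N2 A2 l2 S2"
begin

lemma glue_in_join_class:
  assumes "x \<in> N1" "y \<in> N2" "l1 x = l2 y" "a \<in> S1 x" "b \<in> S2 y"
  shows "glue a b \<in> join_class k S1 S2 (x, y)"
proof -
  have "restrict a T = restrict b T"
    using assms certificate_label[OF cert1] certificate_label[OF cert2] by metis
  then show ?thesis
    using assms glue_coloring[OF certificate_colorings[OF cert1] certificate_colorings[OF cert2]]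
    by (simp add: join_class_def)
qed

lemma join_class_labels:
  assumes "x \<in> N1" "y \<in> N2" "g \<in> join_class k S1 S2 (x, y)"
  shows "restrict g T = l1 x" and "restrict g T = l2 y"
  using assms certificate_label[OF cert1, of x "restrict g V1"]
    certificate_label[OF cert2, of y "restrict g V2"]
  by (simp_all add: join_class_def restrict_side_terminals del: restrict_restrict)

lemma join_class_connected:
  assumes x: "x \<in> N1" and y: "y \<in> N2" and l: "l1 x = l2 y"
  shows "induces_connected V (join_class k S1 S2 (x, y))"
  unfolding induces_connected_iff
proof (intro ballI)
  let ?R = "sol_edges V (join_class k S1 S2 (x, y))"
  have left: "(glue a b, glue a' b) \<in> ?R\<^sup>*"
    if "(a, a') \<in> (sol_edges V1 (S1 x))\<^sup>*" and "b \<in> S2 y" for a a' b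
    using that(1) by (rule rtrancl_hom[where f = "\<lambda>a. glue a b"])
      (use that(2) x y l in \<open>auto simp: sol_edges_def col_adj_glue_left intro: glue_in_join_class\<close>)
  have right: "(glue a b, glue a b') \<in> ?R\<^sup>*"
    if "(b, b') \<in> (sol_edges V2 (S2 y))\<^sup>*" and "a \<in> S1 x" for a b b'
    using that(1) by (rule rtrancl_hom[where f = "glue a"])
      (use that(2) x y l certificate_label[OF cert2 y] in
        \<open>auto simp: sol_edges_def col_adj_glue_right intro: glue_in_join_class\<close>)
  fix g h assume g: "g \<in> join_class k S1 S2 (x, y)" and h: "h \<in> join_class k S1 S2 (x, y)"
  then have "restrict g V1 \<in> S1 x" "restrict h V1 \<in> S1 x" "restrict g V2 \<in> S2 y" "restrict h V2 \<in> S2 y"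
    by (auto simp: join_class_def)
  then have "(glue (restrict g V1) (restrict g V2), glue (restrict h V1) (restrict g V2)) \<in> ?R\<^sup>*"
    "(glue (restrict h V1) (restrict g V2), glue (restrict h V1) (restrict h V2)) \<in> ?R\<^sup>*"
    using certificate_connected[OF cert1 x] certificate_connected[OF cert2 y]
    by (auto simp: induces_connected_iff intro!: left right)
  then show "(g, h) \<in> ?R\<^sup>*"
    using g h glue_restrict by (auto simp: join_class_def)
qed

lemma join_edge_imp_adj:
  assumes p: "(x, y) \<in> prod_nodes N1 l1 N2 l2" and q: "(x', y') \<in> prod_nodes N1 l1 N2 l2"
    and e1: "(x, x') \<in> A1" and e2: "(y, y') \<in> A2"
  shows "\<exists>g\<in>join_class k S1 S2 (x, y). \<exists>g'\<in>join_class k S1 S2 (x', y'). col_adj V g g'"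
proof -
  have in_N: "x \<in> N1" "y \<in> N2" "x' \<in> N1" "y' \<in> N2" and l: "l1 x = l2 y" "l1 x' = l2 y'"
    using p q by (auto simp: prod_nodes_def)
  have "l1 x \<noteq> l1 x'" "l2 y \<noteq> l2 y'"
    using certificate_edge_label[OF cert1 e1] certificate_edge_label[OF cert2 e2] .
  then obtain a a' b b' where a: "a \<in> S1 x" "a' \<in> S1 x'" "col_adj V1 a a'"
    and b: "b \<in> S2 y" "b' \<in> S2 y'" "col_adj V2 b b'"
    using e1 e2 in_N certificate_edge_iff[OF cert1] certificate_edge_iff[OF cert2] by metis
  have la: "restrict a T = l1 x" "restrict a' T = l1 x'"
    and lb: "restrict b T = l2 y" "restrict b' T = l2 y'"
    using a b in_N certificate_label[OF cert1] certificate_label[OF cert2] by blast+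
  obtain t where t: "t \<in> T" "{w \<in> V1. a w \<noteq> a' w} = {t}"
    using col_adj_differ_in[OF a(3) terminals_sub(1)] la \<open>l1 x \<noteq> l1 x'\<close> by auto
  obtain t' where t': "t' \<in> T" "{w \<in> V2. b w \<noteq> b' w} = {t'}"
    using col_adj_differ_in[OF b(3) terminals_sub(2)] lb \<open>l2 y \<noteq> l2 y'\<close> by auto
  \<comment> \<open>both moves recolor the same terminal, since a, b and a', b' agree on T\<close>
  have "restrict a T = restrict b T" "restrict a' T = restrict b' T"
    using la lb l by simp_all
  moreover have "a t \<noteq> a' t"
    using t by blast
  ultimately have "b t \<noteq> b' t"
    using t(1) by (metis restrict_eq_iff)
  then have "t \<in> {w \<in> V2. b w \<noteq> b' w}"
    using t(1) terminals_sub(2) by blast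
  then have "t' = t"
    using t'(2) by simp
  then have "{w \<in> V. glue a b w \<noteq> glue a' b' w} = {t}"
    using t t' by (auto simp: glue_diff)
  then have "col_adj V (glue a b) (glue a' b')"
    by (auto simp: col_adj_iff)
  moreover have "glue a b \<in> join_class k S1 S2 (x, y)" "glue a' b' \<in> join_class k S1 S2 (x', y')"
    using a b in_N l by (auto intro: glue_in_join_class)
  ultimately show ?thesis by blast
qed

lemma adj_imp_join_edge:
  assumes p: "(x, y) \<in> prod_nodes N1 l1 N2 l2" and q: "(x', y') \<in> prod_nodes N1 l1 N2 l2"
    and "(x, y) \<noteq> (x', y')"
    and g: "g \<in> join_class k S1 S2 (x, y)" and g': "g' \<in> join_class k S1 S2 (x', y')"
    and adj: "col_adj V g g'"
  shows "(x, x') \<in> A1 \<and> (y, y') \<in> A2"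
proof -
  have in_N: "x \<in> N1" "y \<in> N2" "x' \<in> N1" "y' \<in> N2"
    using p q by (auto simp: prod_nodes_def)
  have res: "restrict g V1 \<in> S1 x" "restrict g V2 \<in> S2 y"
      "restrict g' V1 \<in> S1 x'" "restrict g' V2 \<in> S2 y'"
    using g g' by (auto simp: join_class_def)
  have cases1: "restrict g V1 = restrict g' V1 \<or> col_adj V1 (restrict g V1) (restrict g' V1)"
    and cases2: "restrict g V2 = restrict g' V2 \<or> col_adj V2 (restrict g V2) (restrict g' V2)"
    using col_adj_restrict_subset[OF sides_sub(1) adj] col_adj_restrict_subset[OF sides_sub(2) adj] .
  \<comment> \<open>a move keeping the label never leaves a class of either certificate\<close>
  have labels: "restrict g T \<noteq> restrict g' T"
  proof
    assume same: "restrict g T = restrict g' T"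
    then have "x = x'" "y = y'"
      using cases1 cases2 restrict_side_terminals
      by (metis certificate_same_class[OF cert1 in_N(1,3) res(1,3)],
          metis certificate_same_class[OF cert2 in_N(2,4) res(2,4)])
    with \<open>(x, y) \<noteq> (x', y')\<close> show False by simp
  qed
  then have "x \<noteq> x'" "y \<noteq> y'"
    using join_class_labels[OF in_N(1,2) g] join_class_labels[OF in_N(3,4) g'] by auto
  moreover have "col_adj V1 (restrict g V1) (restrict g' V1)" "col_adj V2 (restrict g V2) (restrict g' V2)"
    using cases1 cases2 labels restrict_side_terminals by metis+
  ultimately show ?thesis
    using in_N res certificate_edge_iff[OF cert1] certificate_edge_iff[OF cert2] by blast
qed

lemma join_certificate:
  "is_certificate k V E T (prod_nodes N1 l1 N2 l2) (prod_edges N1 A1 l1 N2 A2 l2) (prod_label l1)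
     (join_class k S1 S2)"
proof -
  let ?P = "prod_nodes N1 l1 N2 l2"
  have nonempty: "join_class k S1 S2 p \<noteq> {}" if p: "p \<in> ?P" for p
  proof -
    obtain x y where "p = (x, y)" "x \<in> N1" "y \<in> N2" "l1 x = l2 y"
      using p by (auto simp: prod_nodes_def)
    moreover obtain a b where "a \<in> S1 x" "b \<in> S2 y"
      using certificate_nonempty[OF cert1] certificate_nonempty[OF cert2] calculation by blast
    ultimately show ?thesis
      using glue_in_join_class by blast
  qed
  have covers: "(\<Union>p\<in>?P. join_class k S1 S2 p) = colorings k V E"
  proof (intro equalityI subsetI)
    fix g assume g: "g \<in> colorings k V E"
    obtain x y where "x \<in> N1" "restrict g V1 \<in> S1 x" "y \<in> N2" "restrict g V2 \<in> S2 y"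
      using restrict_coloring[OF induced_sub1 g] restrict_coloring[OF induced_sub2 g]
        certificate_covers[OF cert1] certificate_covers[OF cert2] by metis
    moreover from this have "g \<in> join_class k S1 S2 (x, y)"
      using g by (simp add: join_class_def)
    ultimately show "g \<in> (\<Union>p\<in>?P. join_class k S1 S2 p)"
      using join_class_labels by (force simp: prod_nodes_def)
  qed (auto simp: join_class_def)
  have disjoint: "join_class k S1 S2 p \<inter> join_class k S1 S2 q = {}"
    if "p \<in> ?P" "q \<in> ?P" "p \<noteq> q" for p q
    using that certificate_disjoint[OF cert1] certificate_disjoint[OF cert2]
    by (auto simp: prod_nodes_def join_class_def prod_eq_iff)
  have labels: "restrict g T = prod_label l1 p" if "p \<in> ?P" "g \<in> join_class k S1 S2 p" for p g
    using that join_class_labels by (auto simp: prod_nodes_def prod_label_def)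
  have edge_labels: "\<forall>(p, q)\<in>prod_edges N1 A1 l1 N2 A2 l2. prod_label l1 p \<noteq> prod_label l1 q"
    using certificate_edge_label[OF cert1] by (auto simp: prod_edges_def prod_label_def)
  have connected: "induces_connected V (join_class k S1 S2 p)" if "p \<in> ?P" for p
    using that join_class_connected by (auto simp: prod_nodes_def)
  have edges: "(p, q) \<in> prod_edges N1 A1 l1 N2 A2 l2 \<longleftrightarrow>
      (\<exists>g\<in>join_class k S1 S2 p. \<exists>g'\<in>join_class k S1 S2 q. col_adj V g g')"
    if "p \<in> ?P" "q \<in> ?P" "p \<noteq> q" for p q
    using that join_edge_imp_adj adj_imp_join_edge by (auto simp: prod_edges_def)
  show ?thesis
    unfolding is_certificate_def
    using nonempty covers disjoint labels edge_labels connected edges by blast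
qed

end

end

theorem lemma4:
  fixes V T V1 V2 :: "'v set" and E E1 E2 :: "('v \<times> 'v) set" and k :: nat
    and N1 :: "'a set" and A1 :: "('a \<times> 'a) set" and l1 :: "'a \<Rightarrow> ('v \<Rightarrow> nat)"
    and N2 :: "'b set" and A2 :: "('b \<times> 'b) set" and l2 :: "'b \<Rightarrow> ('v \<Rightarrow> nat)"
  assumes join: "is_join V E T V1 E1 V2 E2"
    and k: "0 < k"
    and H1: "lgraph N1 A1"
      "lg_iso N1 A1 l1 (csg_nodes k V1 E1 T) (csg_edges k V1 E1 T) (csg_label T)"
    and H2: "lgraph N2 A2"
      "lg_iso N2 A2 l2 (csg_nodes k V2 E2 T) (csg_edges k V2 E2 T) (csg_label T)"
  shows "lg_iso (prod_nodes N1 l1 N2 l2) (prod_edges N1 A1 l1 N2 A2 l2) (prod_label l1)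
            (csg_nodes k V E T) (csg_edges k V E T) (csg_label T)
       \<and> (\<forall>S1 S2. is_certificate k V1 E1 T N1 A1 l1 S1 \<and> is_certificate k V2 E2 T N2 A2 l2 S2 \<longrightarrow>
            (\<exists>S. is_certificate k V E T (prod_nodes N1 l1 N2 l2) (prod_edges N1 A1 l1 N2 A2 l2)
                    (prod_label l1) S \<and>
                 (\<forall>\<gamma>\<in>colorings k V E. \<forall>x\<in>N1. \<forall>y\<in>N2.
                    restrict \<gamma> V1 \<in> S1 x \<longrightarrow> restrict \<gamma> V2 \<in> S2 y \<longrightarrow> \<gamma> \<in> S (x, y))))"
proof -
  interpret terminal_join V T V1 V2 E E1 E2
    using join by unfold_locales
  let ?P = "prod_nodes N1 l1 N2 l2" and ?A = "prod_edges N1 A1 l1 N2 A2 l2"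
  have "A1 \<subseteq> N1 \<times> N1" "A2 \<subseteq> N2 \<times> N2"
    using H1(1) H2(1) by (simp_all add: lgraph_def)
  then obtain S1 S2 where S1: "is_certificate k V1 E1 T N1 A1 l1 S1"
    and S2: "is_certificate k V2 E2 T N2 A2 l2 S2"
    using H1(2) H2(2) certificate_lg_iso_transfer[OF label_components_certificate] by metis
  show ?thesis
  proof (intro conjI allI impI)
    show "lg_iso ?P ?A (prod_label l1) (csg_nodes k V E T) (csg_edges k V E T) (csg_label T)"
      by (rule certificate_lg_iso[OF join_certificate[OF S1 S2]])
  next
    fix S1' S2'
    assume "is_certificate k V1 E1 T N1 A1 l1 S1' \<and> is_certificate k V2 E2 T N2 A2 l2 S2'"
    then show "\<exists>S. is_certificate k V E T ?P ?A (prod_label l1) S \<and>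
        (\<forall>\<gamma>\<in>colorings k V E. \<forall>x\<in>N1. \<forall>y\<in>N2.
          restrict \<gamma> V1 \<in> S1' x \<longrightarrow> restrict \<gamma> V2 \<in> S2' y \<longrightarrow> \<gamma> \<in> S (x, y))"
      using join_certificate by (intro exI[of _ "join_class k S1' S2'"]) (auto simp: join_class_def)
  qed
qed

end
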